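(* Let $B\in\mathbb{R}^{k\times k}$ be symmetric positive definite, $D\in\mathbb{R}^{m\times k}$ of full row rank, $A\in\mathbb{R}^{k\times k}$, $C:\mathbb{R}^k\to\mathbb{R}^{k\times k}$, $\Pi=I-B^{-1}D^T(DB^{-1}D^T)^{-1}D$. Let $h>0$, $y_n\in\mathbb{R}^k$ with $Dy_n=0$, and real coefficients $a_{i,j}$ ($i=1,\dots,s+1$, $j\le i$, with $a_{s+1,s+1}=0$) and $\alpha^k_{i,\gamma}$ ($\gamma=1,\dots,J$). Suppose $Y_1,\dots,Y_{s+1}\in\mathbb{R}^k$ satisfy, for $i=1,\dots,s+1$, $$Y_i=\varphi_i y_n+h\sum_{j=1}^{i-1}a_{i,j}\,\varphi_i\varphi_j^{-1}\,\Pi B^{-1}AY_j+h\,a_{i,i}\,\Pi B^{-1}AY_i,$$ where $Y_i^\gamma:=\sum_k\alpha^k_{i,\gamma}Y_k$ and $\varphi_i:=\exp\!\big(h\Pi B^{-1}C(Y_i^J)\big)\cdots\exp\!\big(h\Pi B^{-1}C(Y_i^1)\big)$ (matrix exponentials). Then $DY_i=0$ for all $i$, and in particular $y_{n+1}:=Y_{s+1}$ satisfies $Dy_{n+1}=0$.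
   Context: This is a DIRK-CF method (a diagonally implicit Runge–Kutta method for the diffusion combined with a commutator-free exponential integrator for the convection, the exponentials being products of exponentials of linear combinations of stage convection operators) applied to the projected semi-discrete Navier–Stokes ODE $\dot y=\Pi B^{-1}Ay+\Pi B^{-1}C(y)y$. *)

theory Defs
  imports "HOL-Analysis.Analysis"
begin

definition mexp :: "real^'n^'n \<Rightarrow> real^'n^'n" where
  "mexp M = (\<Sum>n. (1 / fact n) *\<^sub>R (((\<lambda>X. M ** X) ^^ n) (mat 1)))"

definition proj_Pi :: "real^'k^'k \<Rightarrow> real^'k^'m \<Rightarrow> real^'k^'k" where
  "proj_Pi B D = mat 1 - matrix_inv B ** transpose D ** matrix_inv (D ** matrix_inv B ** transpose D) ** D"

text \<open>Commutator-free product
  \<open>exp(h \<Pi> B^{-1} C(Z_J)) \<cdots> exp(h \<Pi> B^{-1} C(Z_1))\<close>, where \<open>PB = \<Pi> B^{-1}\<close>.\<close>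
definition cf_phi :: "real \<Rightarrow> real^'k^'k \<Rightarrow> (real^'k \<Rightarrow> real^'k^'k) \<Rightarrow> (nat \<Rightarrow> real^'k) \<Rightarrow> nat \<Rightarrow> real^'k^'k" where
  "cf_phi h PB C Z J = foldl (\<lambda>M g. mexp (h *\<^sub>R (PB ** C (Z g))) ** M) (mat 1) [1..<J+1]"

end

theory Submission imports Defs begin

(* Every stage Y_i is a sum of three kinds of terms: phi_i y_n, matrices of the form
   phi_i phi_j^{-1} Pi B^{-1} A applied to Y_j, and Pi B^{-1} A applied to Y_i.  The claim
   D Y_i = 0 follows once D annihilates each kind, which rests on two facts:

   (1) D Pi = 0: with B positive definite and D of full row rank, the Schur complement
       S = D B^{-1} D^T is invertible, so D Pi = D - S S^{-1} D = 0.
   (2) If D M = 0 then D exp(M) = D, because every term of the exponential series beyond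
       the identity starts with the factor M.  Hence D fixes every commutator-free product
       phi of exponentials of multiples of Pi B^{-1} C(.), and, phi being invertible (as
       exp(M) exp(-M) = I), also D phi^{-1} = D.

   To obtain convergence of the matrix exponential series and the identity
   exp(M) exp(-M) = I we realise the n x n matrices inside a real Banach algebra: the
   bounded linear operators on real^'n with composition as product. *)

section \<open>Linear operators on real^'n as a Banach algebra\<close>

text \<open>Bounded linear endomorphisms of \<open>real^'n\<close>, with composition as multiplication.
  The library provides the normed space \<open>blinfun\<close> but no algebra structure on it.\<close>
typedef (overloaded) ('n::finite) linop = "UNIV :: ((real^'n) \<Rightarrow>\<^sub>L (real^'n)) set"
  by simp
setup_lifting type_definition_linop

instantiation linop :: (finite) real_normed_algebra_1
begin
lift_definition zero_linop :: "'a linop" is 0 .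
lift_definition one_linop :: "'a linop" is id_blinfun .
lift_definition plus_linop :: "'a linop \<Rightarrow> 'a linop \<Rightarrow> 'a linop" is "(+)" .
lift_definition minus_linop :: "'a linop \<Rightarrow> 'a linop \<Rightarrow> 'a linop" is "(-)" .
lift_definition uminus_linop :: "'a linop \<Rightarrow> 'a linop" is "uminus" .
lift_definition times_linop :: "'a linop \<Rightarrow> 'a linop \<Rightarrow> 'a linop" is "(o\<^sub>L)" .
lift_definition scaleR_linop :: "real \<Rightarrow> 'a linop \<Rightarrow> 'a linop" is "scaleR" .
lift_definition norm_linop :: "'a linop \<Rightarrow> real" is norm .
lift_definition dist_linop :: "'a linop \<Rightarrow> 'a linop \<Rightarrow> real" is dist .
lift_definition sgn_linop :: "'a linop \<Rightarrow> 'a linop" is "\<lambda>x. x /\<^sub>R norm x" .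
definition uniformity_linop :: "('a linop \<times> 'a linop) filter" where
  "uniformity_linop = (INF e\<in>{0 <..}. principal {(x, y). dist x y < e})"
definition open_linop :: "'a linop set \<Rightarrow> bool" where
  "open_linop U = (\<forall>x\<in>U. \<forall>\<^sub>F (x', y) in uniformity. x' = x \<longrightarrow> y \<in> U)"
instance
proof
  fix x y z :: "'a linop" and a b :: real
  show "x + y + z = x + (y + z)" by transfer simp
  show "x + y = y + x" by transfer simp
  show "0 + x = x" by transfer simp
  show "- x + x = 0" by transfer simp
  show "x - y = x + - y" by transfer simp
  show "a *\<^sub>R (x + y) = a *\<^sub>R x + a *\<^sub>R y" by transfer (simp add: scaleR_add_right)
  show "(a + b) *\<^sub>R x = a *\<^sub>R x + b *\<^sub>R x" by transfer (simp add: scaleR_add_left)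
  show "a *\<^sub>R b *\<^sub>R x = (a * b) *\<^sub>R x" by transfer simp
  show "1 *\<^sub>R x = x" by transfer simp
  show "x * y * z = x * (y * z)"
    by transfer (auto intro!: blinfun_eqI simp: blinfun.bilinear_simps)
  show "1 * x = x" by transfer (auto intro!: blinfun_eqI)
  show "x * 1 = x" by transfer (auto intro!: blinfun_eqI)
  show "(x + y) * z = x * z + y * z"
    by transfer (auto intro!: blinfun_eqI simp: blinfun.bilinear_simps)
  show "x * (y + z) = x * y + x * z"
    by transfer (auto intro!: blinfun_eqI simp: blinfun.bilinear_simps)
  show "(0::'a linop) \<noteq> 1"
    by transfer (metis blinfun_apply_id_blinfun id_apply norm_blinfun_id norm_zero zero_neq_one)
  show "a *\<^sub>R x * y = a *\<^sub>R (x * y)"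
    by transfer (auto intro!: blinfun_eqI simp: blinfun.bilinear_simps blinfun.scaleR_right)
  show "x * a *\<^sub>R y = a *\<^sub>R (x * y)"
    by transfer (auto intro!: blinfun_eqI simp: blinfun.bilinear_simps blinfun.scaleR_right)
  show "dist x y = norm (x - y)" by transfer (simp add: dist_norm)
  show "norm (x + y) \<le> norm x + norm y" by transfer (rule norm_triangle_ineq)
  show "norm (a *\<^sub>R x) = \<bar>a\<bar> * norm x" by transfer simp
  show "(norm x = 0) = (x = 0)" by transfer simp
  show "sgn x = inverse (norm x) *\<^sub>R x" by transfer simp
  show "norm (x * y) \<le> norm x * norm y" by transfer (rule norm_blinfun_compose)
  show "norm (1::'a linop) = 1" by transfer simp
qed (simp_all add: uniformity_linop_def open_linop_def)
end

text \<open>Completeness is inherited from \<open>blinfun\<close>; it is what makes \<open>exp\<close> converge.\<close>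
instance linop :: (finite) banach
proof
  fix X :: "nat \<Rightarrow> 'a linop"
  have dist_Rep: "dist x y = dist (Rep_linop x) (Rep_linop y)" for x y :: "'a linop"
    by transfer simp
  assume "Cauchy X"
  then have "Cauchy (\<lambda>n. Rep_linop (X n))"
    unfolding Cauchy_def dist_Rep by simp
  then obtain L where L: "(\<lambda>n. Rep_linop (X n)) \<longlonglongrightarrow> L"
    using convergent_eq_Cauchy by blast
  have "X \<longlonglongrightarrow> Abs_linop L"
    using L unfolding tendsto_iff dist_Rep by (simp add: Abs_linop_inverse)
  then show "convergent X" by (auto simp: convergent_def)
qed

definition op_matrix :: "'n::finite linop \<Rightarrow> real^'n^'n" where
  "op_matrix x = matrix (blinfun_apply (Rep_linop x))"

definition matrix_op :: "real^'n^'n \<Rightarrow> 'n::finite linop" where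
  "matrix_op M = Abs_linop (Blinfun ((*v) M))"

lemma bounded_linear_matrix_vector_mult: "bounded_linear ((*v) (M::real^'n^'m))"
  by (simp add: linear_conv_bounded_linear)

lemma op_matrix_matrix_op [simp]: "op_matrix (matrix_op M) = M"
  by (simp add: op_matrix_def matrix_op_def Abs_linop_inverse
      bounded_linear_Blinfun_apply[OF bounded_linear_matrix_vector_mult])

text \<open>\<open>op_matrix\<close> is a unital algebra homomorphism \<dots>\<close>
lemma op_matrix_mult: "op_matrix (x * y) = op_matrix x ** op_matrix y"
proof -
  have "blinfun_apply (Rep_linop (x * y)) = blinfun_apply (Rep_linop x) o blinfun_apply (Rep_linop y)"
    by (simp add: times_linop.rep_eq fun_eq_iff)
  then show ?thesis
    unfolding op_matrix_def
    by (simp add: matrix_compose bounded_linear.linear[OF blinfun.bounded_linear_right])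
qed

lemma op_matrix_one: "op_matrix 1 = mat 1"
proof -
  have "blinfun_apply (Rep_linop 1) = id" by (simp add: one_linop.rep_eq fun_eq_iff)
  then show ?thesis unfolding op_matrix_def by (metis matrix_id_mat_1)
qed

lemma matrix_op_uminus: "matrix_op (- M) = - matrix_op M"
proof -
  have "Blinfun ((*v) (- M)) = - Blinfun ((*v) M)"
    by (rule blinfun_eqI)
      (simp add: blinfun.minus_left bounded_linear_Blinfun_apply[OF bounded_linear_matrix_vector_mult]
        matrix_vector_mult_def vec_eq_iff sum_negf)
  then show ?thesis unfolding matrix_op_def
    by (metis Abs_linop_inverse UNIV_I uminus_linop.abs_eq)
qed

text \<open>\<dots> which is also bounded linear (each matrix entry is bounded by the operator norm),
  so it commutes with infinite sums.\<close>
lemma bounded_linear_op_matrix: "bounded_linear (op_matrix :: 'n::finite linop \<Rightarrow> real^'n^'n)"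
proof (rule bounded_linear_intro[where K="real CARD('n) * real CARD('n)"])
  fix x y :: "'n linop" and r :: real
  show "op_matrix (x + y) = op_matrix x + op_matrix y"
    by (simp add: op_matrix_def matrix_def plus_linop.rep_eq vec_eq_iff blinfun.bilinear_simps)
  show "op_matrix (r *\<^sub>R x) = r *\<^sub>R op_matrix x"
    by (simp add: op_matrix_def matrix_def scaleR_linop.rep_eq vec_eq_iff blinfun.bilinear_simps)
  have entry: "\<bar>op_matrix x $ i $ j\<bar> \<le> norm x" for i j
  proof -
    have "\<bar>op_matrix x $ i $ j\<bar> = \<bar>blinfun_apply (Rep_linop x) (axis j 1) $ i\<bar>"
      by (simp add: op_matrix_def matrix_def)
    also have "\<dots> \<le> norm (blinfun_apply (Rep_linop x) (axis j 1))"
      by (rule component_le_norm_cart)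
    also have "\<dots> \<le> norm (Rep_linop x) * norm (axis j (1::real))"
      by (rule norm_blinfun)
    also have "\<dots> = norm x" by (simp add: norm_linop.rep_eq)
    finally show ?thesis .
  qed
  have "norm (op_matrix x) \<le> (\<Sum>i\<in>UNIV. norm (op_matrix x $ i))"
    unfolding norm_vec_def by (rule L2_set_le_sum) simp
  also have "\<dots> \<le> (\<Sum>i\<in>(UNIV::'n set). \<Sum>j\<in>(UNIV::'n set). \<bar>op_matrix x $ i $ j\<bar>)"
    by (intro sum_mono norm_le_l1_cart)
  also have "\<dots> \<le> (\<Sum>i\<in>(UNIV::'n set). \<Sum>j\<in>(UNIV::'n set). norm x)"
    by (intro sum_mono entry)
  finally show "norm (op_matrix x) \<le> norm x * (real CARD('n) * real CARD('n))"
    by (simp add: algebra_simps)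
qed

section \<open>The matrix exponential\<close>

lemma op_matrix_power: "op_matrix (matrix_op M ^ n) = ((\<lambda>X. M ** X) ^^ n) (mat 1)"
proof (induction n)
  case 0
  show ?case by (simp add: op_matrix_one)
next
  case (Suc n)
  show ?case by (simp add: op_matrix_mult Suc.IH)
qed

lemma mexp_sums_exp:
  "(\<lambda>n. (1 / fact n) *\<^sub>R (((\<lambda>X. M ** X) ^^ n) (mat 1))) sums op_matrix (exp (matrix_op M))"
proof -
  have "(\<lambda>n. op_matrix (matrix_op M ^ n /\<^sub>R fact n)) sums op_matrix (exp (matrix_op M))"
    by (rule bounded_linear.sums[OF bounded_linear_op_matrix exp_converges])
  moreover have "op_matrix (matrix_op M ^ n /\<^sub>R fact n) = (1 / fact n) *\<^sub>R (((\<lambda>X. M ** X) ^^ n) (mat 1))"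
    for n
    using linear_scale[OF bounded_linear.linear[OF bounded_linear_op_matrix],
        of "inverse (fact n)" "matrix_op M ^ n"]
    by (simp add: op_matrix_power divide_inverse)
  ultimately show ?thesis by simp
qed

lemma mexp_eq_exp: "mexp M = op_matrix (exp (matrix_op M))"
  unfolding mexp_def by (rule sums_unique[OF mexp_sums_exp, symmetric])

lemma mexp_sums: "(\<lambda>n. (1 / fact n) *\<^sub>R (((\<lambda>X. M ** X) ^^ n) (mat 1))) sums mexp M"
  using mexp_sums_exp by (simp add: mexp_eq_exp)

text \<open>\<open>exp(M) exp(-M) = I\<close>, so every matrix exponential is invertible.\<close>
lemma invertible_mexp: "invertible (mexp M)"
proof -
  have inverse: "mexp N ** mexp (- N) = mat 1" for N :: "real^'n^'n"
    unfolding mexp_eq_exp matrix_op_uminus op_matrix_mult[symmetric] exp_minus_inverse op_matrix_one ..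
  show ?thesis
    unfolding invertible_def using inverse[of M] inverse[of "- M"] by auto
qed

section \<open>Left annihilators\<close>

lemma bounded_linear_matrix_mult_left: "bounded_linear (\<lambda>X::real^'n^'k. (D::real^'k^'m) ** X)"
proof -
  have "linear (\<lambda>X::real^'n^'k. D ** X)"
    by (rule linearI)
      (simp_all add: matrix_matrix_mult_def vec_eq_iff sum_distrib_left sum.distrib algebra_simps)
  then show ?thesis by (simp add: linear_conv_bounded_linear)
qed

lemma matrix_mult_scaleR_right: "(D::real^'k^'m) ** (r *\<^sub>R M) = r *\<^sub>R (D ** M)"
  by (simp add: matrix_scalar_ac scalar_matrix_assoc)

text \<open>If \<open>D M = 0\<close> then \<open>D exp(M) = D\<close>: applying \<open>D\<close> to the exponential series kills all
  terms but the identity.\<close>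
lemma left_annihilator_mexp:
  fixes D :: "real^'k^'m" and M :: "real^'k^'k"
  assumes DM: "D ** M = 0"
  shows "D ** mexp M = D"
proof -
  let ?term = "\<lambda>n. (1 / fact n) *\<^sub>R (((\<lambda>X. M ** X) ^^ n) (mat 1))"
  have images: "(\<lambda>n. D ** ?term n) sums (D ** mexp M)"
    by (rule bounded_linear.sums[OF bounded_linear_matrix_mult_left mexp_sums])
  have "D ** ?term n = (if n = 0 then D else 0)" for n
  proof (cases n)
    case (Suc m)
    have "D ** (((\<lambda>X. M ** X) ^^ n) (mat 1)) = 0"
      using DM by (simp add: Suc matrix_mul_assoc)
    then show ?thesis by (simp add: Suc matrix_mult_scaleR_right)
  qed simp
  then have "(\<lambda>n. D ** ?term n) sums D"
    using sums_single[of 0 "\<lambda>_. D"] by simp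
  then show ?thesis using images sums_unique2 by blast
qed

lemma invertible_foldl_mexp:
  "invertible M0 \<Longrightarrow> invertible (foldl (\<lambda>M g. mexp (f g) ** M) M0 xs)"
proof (induction xs arbitrary: M0)
  case (Cons x xs)
  show ?case using Cons.IH invertible_mult[OF invertible_mexp Cons.prems] by simp
qed simp

lemma left_annihilator_foldl_mexp:
  fixes D :: "real^'k^'m"
  assumes "\<And>g. D ** f g = 0"
  shows "D ** foldl (\<lambda>M g. mexp (f g) ** M) M0 xs = D ** M0"
  by (induction xs arbitrary: M0) (simp_all add: matrix_mul_assoc left_annihilator_mexp assms)

lemma invertible_cf_phi: "invertible (cf_phi h PB C Z J)"
  unfolding cf_phi_def
  by (rule invertible_foldl_mexp) (auto simp: invertible_def)

lemma left_annihilator_cf_phi: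
  fixes D :: "real^'k^'m"
  assumes DPB: "D ** PB = 0"
  shows "D ** cf_phi h PB C Z J = D"
proof -
  have "D ** (h *\<^sub>R (PB ** C (Z g))) = 0" for g
    by (simp add: matrix_mult_scaleR_right matrix_mul_assoc DPB)
  then have "D ** foldl (\<lambda>M g. mexp (h *\<^sub>R (PB ** C (Z g))) ** M) (mat 1) [1..<J+1] = D ** mat 1"
    by (rule left_annihilator_foldl_mexp)
  then show ?thesis by (simp only: cf_phi_def matrix_mul_rid)
qed

lemma matrix_inv_right: "invertible (M::real^'n^'n) \<Longrightarrow> M ** matrix_inv M = mat 1"
  unfolding invertible_def matrix_inv_def by (rule conjunct1[OF someI_ex])

lemma left_annihilator_cf_phi_inv:
  fixes D :: "real^'k^'m"
  assumes "D ** PB = 0"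
  shows "D ** matrix_inv (cf_phi h PB C Z J) = D"
proof -
  let ?phi = "cf_phi h PB C Z J"
  have "D ** matrix_inv ?phi = D ** ?phi ** matrix_inv ?phi"
    using left_annihilator_cf_phi[OF assms] by simp
  also have "\<dots> = D"
    by (simp add: matrix_mul_assoc[symmetric] matrix_inv_right[OF invertible_cf_phi])
  finally show ?thesis .
qed

section \<open>The projection \<open>\<Pi>\<close> maps into the kernel of \<open>D\<close>\<close>

lemma invertible_of_injective: "(\<And>x. (M::real^'n^'n) *v x = 0 \<Longrightarrow> x = 0) \<Longrightarrow> invertible M"
  using matrix_left_invertible_ker invertible_left_inverse by blast

lemma posdef_invertible:
  fixes B :: "real^'k^'k"
  assumes "\<forall>x. x \<noteq> 0 \<longrightarrow> x \<bullet> (B *v x) > 0"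
  shows "invertible B"
  by (rule invertible_of_injective) (metis assms inner_zero_right less_irrefl)

text \<open>The Schur complement \<open>D B\<^sup>-\<^sup>1 D\<^sup>T\<close> is positive definite, hence invertible: with
  \<open>w = B\<^sup>-\<^sup>1 D\<^sup>T x\<close> one has \<open>x \<bullet> D B\<^sup>-\<^sup>1 D\<^sup>T x = w \<bullet> B w\<close>, and \<open>w \<noteq> 0\<close> for \<open>x \<noteq> 0\<close>
  since \<open>D\<^sup>T\<close> is injective.\<close>
lemma invertible_schur_complement:
  fixes B :: "real^'k^'k" and D :: "real^'k^'m"
  assumes B_pos: "\<forall>x. x \<noteq> 0 \<longrightarrow> x \<bullet> (B *v x) > 0"
    and D_rank: "rank D = CARD('m)"
  shows "invertible (D ** matrix_inv B ** transpose D)"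
proof (rule invertible_of_injective, rule ccontr)
  fix x
  assume Sx: "(D ** matrix_inv B ** transpose D) *v x = 0" and x0: "x \<noteq> 0"
  define w where "w = matrix_inv B *v (transpose D *v x)"
  have Bw: "B *v w = transpose D *v x"
    unfolding w_def
    by (simp add: matrix_vector_mul_assoc matrix_inv_right[OF posdef_invertible[OF B_pos]])
  have "inj ((*v) (transpose D))"
    using full_rank_injective[of "transpose D"] rank_transpose[of D] D_rank by simp
  then have "transpose D *v x \<noteq> 0"
    using x0 by (metis inj_eq matrix_vector_mult_0_right)
  then have "w \<noteq> 0" using Bw by auto
  have "x \<bullet> ((D ** matrix_inv B ** transpose D) *v x) = (transpose D *v x) \<bullet> w"
    unfolding w_def
    by (simp add: matrix_vector_mul_assoc[symmetric] dot_lmul_matrix[symmetric])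
  also have "\<dots> = w \<bullet> (B *v w)" using Bw by (simp add: inner_commute)
  also have "\<dots> > 0" using B_pos \<open>w \<noteq> 0\<close> by blast
  finally show False using Sx by simp
qed

lemma matrix_mult_diff_left: "(M::real^'n^'m) ** (N - P) = M ** N - M ** P"
  by (simp add: matrix_matrix_mult_def vec_eq_iff sum_subtractf algebra_simps)

text \<open>\<open>D \<Pi> = D - S S\<^sup>-\<^sup>1 D = 0\<close> with \<open>S\<close> the Schur complement.\<close>
lemma left_annihilator_proj_Pi:
  fixes B :: "real^'k^'k" and D :: "real^'k^'m"
  assumes "\<forall>x. x \<noteq> 0 \<longrightarrow> x \<bullet> (B *v x) > 0"
    and "rank D = CARD('m)"
  shows "D ** proj_Pi B D = 0"
proof -
  let ?S = "D ** matrix_inv B ** transpose D"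
  have "D ** proj_Pi B D = D - ?S ** matrix_inv ?S ** D"
    unfolding proj_Pi_def by (simp add: matrix_mult_diff_left matrix_mul_assoc)
  also have "\<dots> = 0"
    by (simp add: matrix_inv_right[OF invertible_schur_complement[OF assms]])
  finally show ?thesis .
qed

lemma stage_in_kernel:
  fixes D :: "real^'k^'m"
  assumes "D ** Phi = D" "\<And>j. D ** Psi j = D" "D ** P = 0" "D *v y = 0"
  shows "D *v (Phi *v y + h *\<^sub>R (\<Sum>j\<in>I. a j *\<^sub>R ((Phi ** Psi j ** P) *v Y j))
                + c *\<^sub>R (P *v Z)) = 0"
proof -
  have lin: "linear ((*v) D)" by simp
  have "D *v ((Phi ** Psi j ** P) *v v) = 0" for j v
    using assms by (simp add: matrix_vector_mul_assoc matrix_mul_assoc)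
  moreover have "D *v (Phi *v y) = 0" "D *v (P *v Z) = 0"
    using assms by (simp_all add: matrix_vector_mul_assoc)
  ultimately show ?thesis
    by (simp add: linear_add[OF lin] linear_scale[OF lin] linear_sum[OF lin])
qed

theorem mainTheorem4:
  fixes B A :: "real^'k^'k" and D :: "real^'k^'m" and C :: "real^'k \<Rightarrow> real^'k^'k"
    and h :: real and y :: "real^'k" and s J :: nat
    and a :: "nat \<Rightarrow> nat \<Rightarrow> real" and alpha :: "nat \<Rightarrow> nat \<Rightarrow> nat \<Rightarrow> real"
    and Y :: "nat \<Rightarrow> real^'k"
  assumes B_sym: "transpose B = B"
    and B_pos: "\<forall>x. x \<noteq> 0 \<longrightarrow> x \<bullet> (B *v x) > 0"
    and D_rank: "rank D = CARD('m)"
    and h_pos: "h > 0"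
    and y_div: "D *v y = 0"
    and a_last: "a (s+1) (s+1) = 0"
    and stages: "\<forall>i\<in>{1..s+1}.
      Y i = cf_phi h (proj_Pi B D ** matrix_inv B) C
                 (\<lambda>g. \<Sum>kk\<in>{1..s+1}. alpha kk i g *\<^sub>R Y kk) J *v y
          + h *\<^sub>R (\<Sum>j\<in>{1..<i}. a i j *\<^sub>R
               ((cf_phi h (proj_Pi B D ** matrix_inv B) C
                   (\<lambda>g. \<Sum>kk\<in>{1..s+1}. alpha kk i g *\<^sub>R Y kk) J
                 ** matrix_inv (cf_phi h (proj_Pi B D ** matrix_inv B) C
                   (\<lambda>g. \<Sum>kk\<in>{1..s+1}. alpha kk j g *\<^sub>R Y kk) J)
                 ** proj_Pi B D ** matrix_inv B ** A) *v Y j))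
          + (h * a i i) *\<^sub>R ((proj_Pi B D ** matrix_inv B ** A) *v Y i)"
  shows "(\<forall>i\<in>{1..s+1}. D *v Y i = 0) \<and> D *v Y (s+1) = 0"
proof -
  let ?PB = "proj_Pi B D ** matrix_inv B"
  let ?phi = "\<lambda>l. cf_phi h ?PB C (\<lambda>g. \<Sum>kk\<in>{1..s+1}. alpha kk l g *\<^sub>R Y kk) J"
  have DPB: "D ** ?PB = 0"
    using left_annihilator_proj_Pi[OF B_pos D_rank] by (simp add: matrix_mul_assoc)
  then have DP: "D ** (?PB ** A) = 0" by (simp add: matrix_mul_assoc)
  have "D *v Y i = 0" if i: "i \<in> {1..s+1}" for i
  proof -
    have "Y i = ?phi i *v y
        + h *\<^sub>R (\<Sum>j\<in>{1..<i}. a i j *\<^sub>R ((?phi i ** matrix_inv (?phi j) ** (?PB ** A)) *v Y j))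
        + (h * a i i) *\<^sub>R ((?PB ** A) *v Y i)"
      (is "_ = ?stage") using bspec[OF stages i] unfolding matrix_mul_assoc .
    then have "D *v Y i = D *v ?stage" by (rule arg_cong)
    also have "\<dots> = 0"
      by (rule stage_in_kernel[OF left_annihilator_cf_phi[OF DPB]
            left_annihilator_cf_phi_inv[OF DPB] DP y_div])
    finally show ?thesis .
  qed
  then show ?thesis by auto
qed

end
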